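(* Let $0\le q\in L_1^{loc}(\mathbb{R})$ and suppose $q=q_1+q_2$ on $\mathbb{R}$, where $q_1>0$ is absolutely continuous and $q_2\in L_1^{loc}(\mathbb{R})$. Suppose there is a continuous function $s>0$ on $\mathbb{R}$ such that: (a) $s(x)\to\infty$ as $|x|\to\infty$; (b) $\frac{1}{s(x)}\ge\frac{|q_1'(x)|}{q_1(x)^2}$ for all $|x|$ sufficiently large; (c) $\lim_{|x|\to\infty}\frac{s(x)}{x\,q_1(x)}=0$; (d) for some $\nu\in[1,\infty)$, $\frac1\nu\le\frac{s(t)}{s(x)}\le\nu$ for all $t\in\Delta(x)$ and all $|x|$ sufficiently large, where $\Delta(x)=\big[x-\frac{s(x)}{q_1(x)},\,x+\frac{s(x)}{q_1(x)}\big]$; (e) $\varkappa_0:=\sup_{x\in\mathbb{R}}\tilde\varkappa(x)<\infty$, where $\tilde\varkappa(x)=\sup_{t\in\Delta(x)}|\varkappa_x(t)|$ and $\varkappa_x(t)=q_1(t)\int_x^t\frac{q_2(\xi)}{q_1(\xi)}d\xi$ for $t\in\Delta(x)$. Then, with $J(x)=\int_x^\infty\exp\big(-\int_x^t q(\xi)\,d\xi\big)\,dt$, there is a constant $c\in(0,\infty)$ such that $$\frac{c^{-1}}{q_1(x)}\le J(x)\le\frac{c}{q_1(x)},\quad x\in\mathbb{R}.$$ *)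

theory Defs
  imports "HOL-Analysis.Analysis"
begin

definition abs_cont_on :: "(real \<Rightarrow> real) \<Rightarrow> real \<Rightarrow> real \<Rightarrow> bool" where
  "abs_cont_on f a b \<longleftrightarrow>
     (\<forall>\<epsilon>>0. \<exists>\<delta>>0. \<forall>(n::nat) (u::nat \<Rightarrow> real) (v::nat \<Rightarrow> real).
        (\<forall>i<n. a \<le> u i \<and> u i \<le> v i \<and> v i \<le> b) \<and>
        (\<forall>i<n. \<forall>j<n. i \<noteq> j \<longrightarrow> v i \<le> u j \<or> v j \<le> u i) \<and>
        (\<Sum>i<n. v i - u i) < \<delta>
        \<longrightarrow> (\<Sum>i<n. \<bar>f (v i) - f (u i)\<bar>) < \<epsilon>)"

definition loc_abs_cont :: "(real \<Rightarrow> real) \<Rightarrow> bool" where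
  "loc_abs_cont f \<longleftrightarrow> (\<forall>a b. abs_cont_on f a b)"

definition loc_integrable :: "(real \<Rightarrow> real) \<Rightarrow> bool" where
  "loc_integrable f \<longleftrightarrow> (\<forall>a b. set_integrable lborel {a..b} f)"

definition Delta :: "(real \<Rightarrow> real) \<Rightarrow> (real \<Rightarrow> real) \<Rightarrow> real \<Rightarrow> real set" where
  "Delta s q1 x = {x - s x / q1 x .. x + s x / q1 x}"

definition J :: "(real \<Rightarrow> real) \<Rightarrow> real \<Rightarrow> ennreal" where
  "J q x = (\<integral>\<^sup>+ t. indicator {x..} t * ennreal (exp (- (LBINT \<xi>=x..t. q \<xi>))) \<partial>lborel)"

end

theory Submission
  imports Defs
begin

(* Write Q(x,t) for the integral of q over [x,t] and J_T(x) for the integral of exp(-Q(x,t)) over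
   [x,T], so that J = sup_T J_T.  Since 1/q1 is absolutely continuous with |(1/q1)'| <= 1/s a.e.
   far out, conditions (a)-(d) show that for large |x| the weight q1 changes by at most a factor 2
   on the step [x, x + H/q1(x)], which lies in Delta(x).  Writing q = q1 (1 + q2/q1), condition (e)
   then gives Q(x, x + H/q1(x)) >= 2 and Q(x, x + 1/q1(x)) <= 2 + 3K.  The second estimate is the
   lower bound J(x) >= exp(-2-3K)/q1(x).  Splitting J_T(x) at x' = x + H/q1(x), the first one gives
   q1(x) J_T(x) <= H + q1(x') J_T(x')/2; as q1 J_T is bounded on compact sets, taking suprema over
   half-lines bounds q1 J_T uniformly in T, hence q1 J.  On the compact middle region both bounds
   are trivial. *)

section \<open>Absolutely continuous functions\<close>

definition nonoverlapping_subintervals :: "real set \<Rightarrow> nat \<Rightarrow> (nat \<Rightarrow> real) \<Rightarrow> (nat \<Rightarrow> real) \<Rightarrow> bool" where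
  "nonoverlapping_subintervals S n u v \<longleftrightarrow>
     (\<forall>i<n. u i \<le> v i \<and> {u i..v i} \<subseteq> S) \<and> (\<forall>i<n. \<forall>j<n. i \<noteq> j \<longrightarrow> v i \<le> u j \<or> v j \<le> u i)"

lemma nonoverlapping_subintervals_mono:
  "nonoverlapping_subintervals S n u v \<Longrightarrow> S \<subseteq> S' \<Longrightarrow> nonoverlapping_subintervals S' n u v"
  unfolding nonoverlapping_subintervals_def by blast

lemma nonoverlapping_subintervals_snoc:
  assumes "nonoverlapping_subintervals (S \<inter> {..t}) n u v" and "t \<le> t'" and "{t..t'} \<subseteq> S"
  shows "nonoverlapping_subintervals S (Suc n) (u(n := t)) (v(n := t'))"
  using assms unfolding nonoverlapping_subintervals_def by (auto simp: less_Suc_eq subset_eq)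

lemma abs_cont_on_iff:
  "abs_cont_on f a b \<longleftrightarrow> (\<forall>\<epsilon>>0. \<exists>\<delta>>0. \<forall>n u v. nonoverlapping_subintervals {a..b} n u v \<longrightarrow>
      (\<Sum>i<n. v i - u i) < \<delta> \<longrightarrow> (\<Sum>i<n. \<bar>f (v i) - f (u i)\<bar>) < \<epsilon>)"
proof -
  have "nonoverlapping_subintervals {a..b} n u v \<longleftrightarrow>
      (\<forall>i<n. a \<le> u i \<and> u i \<le> v i \<and> v i \<le> b) \<and> (\<forall>i<n. \<forall>j<n. i \<noteq> j \<longrightarrow> v i \<le> u j \<or> v j \<le> u i)"
    for n u v
    unfolding nonoverlapping_subintervals_def by auto
  then show ?thesis
    unfolding abs_cont_on_def by (simp add: imp_conjL)
qed

lemma abs_cont_onD: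
  assumes "abs_cont_on f a b" and "0 < \<epsilon>"
  obtains \<delta> where "0 < \<delta>"
    and "\<And>n u v. nonoverlapping_subintervals {a..b} n u v \<Longrightarrow> (\<Sum>i<n. v i - u i) < \<delta> \<Longrightarrow>
           (\<Sum>i<n. \<bar>f (v i) - f (u i)\<bar>) < \<epsilon>"
proof -
  from assms obtain \<delta> where "0 < \<delta>" and small: "\<forall>n u v. nonoverlapping_subintervals {a..b} n u v \<longrightarrow>
      (\<Sum>i<n. v i - u i) < \<delta> \<longrightarrow> (\<Sum>i<n. \<bar>f (v i) - f (u i)\<bar>) < \<epsilon>"
    unfolding abs_cont_on_iff by blast
  show thesis
    by (rule that[OF \<open>0 < \<delta>\<close>]) (use small in blast)
qed

lemma abs_cont_on_uminus_iff: "abs_cont_on (\<lambda>x. - f x) a b \<longleftrightarrow> abs_cont_on f a b"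
  unfolding abs_cont_on_def by (simp add: abs_minus_commute)

lemma loc_abs_cont_imp_continuous:
  assumes "loc_abs_cont f"
  shows "continuous_on UNIV f"
proof -
  have "isCont f x" for x
    unfolding continuous_at_eps_delta
  proof (intro allI impI)
    fix \<epsilon> :: real
    assume "0 < \<epsilon>"
    have "abs_cont_on f (x - 1) (x + 1)"
      using assms by (simp add: loc_abs_cont_def)
    from this \<open>0 < \<epsilon>\<close> obtain \<delta> where "0 < \<delta>" and small: "\<And>n u v.
        nonoverlapping_subintervals {x - 1..x + 1} n u v \<Longrightarrow> (\<Sum>i<n. v i - u i) < \<delta> \<Longrightarrow>
        (\<Sum>i<n. \<bar>f (v i) - f (u i)\<bar>) < \<epsilon>"
      by (rule abs_cont_onD) auto
    have "dist (f y) (f x) < \<epsilon>" if "dist y x < min \<delta> 1" for y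
      using small[of 1 "\<lambda>_. min x y" "\<lambda>_. max x y"] that
      by (cases "x \<le> y") (auto simp: nonoverlapping_subintervals_def dist_real_def abs_minus_commute)
    with \<open>0 < \<delta>\<close> show "\<exists>d>0. \<forall>y. dist y x < d \<longrightarrow> dist (f y) (f x) < \<epsilon>"
      by (intro exI[of _ "min \<delta> 1"]) auto
  qed
  then show ?thesis
    by (simp add: continuous_at_imp_continuous_on)
qed

lemma abs_cont_on_inverse:
  assumes ac: "abs_cont_on f a b" and "0 < m" and ge: "\<And>x. x \<in> {a..b} \<Longrightarrow> m \<le> f x"
  shows "abs_cont_on (\<lambda>x. 1 / f x) a b"
  unfolding abs_cont_on_iff
proof (intro allI impI)
  fix \<epsilon> :: real
  assume "0 < \<epsilon>"
  then have "0 < \<epsilon> * m\<^sup>2"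
    using \<open>0 < m\<close> by simp
  with ac obtain \<delta> where "0 < \<delta>" and small: "\<And>n u v.
        nonoverlapping_subintervals {a..b} n u v \<Longrightarrow> (\<Sum>i<n. v i - u i) < \<delta> \<Longrightarrow>
        (\<Sum>i<n. \<bar>f (v i) - f (u i)\<bar>) < \<epsilon> * m\<^sup>2"
    by (rule abs_cont_onD) auto
  have "(\<Sum>i<n. \<bar>1 / f (v i) - 1 / f (u i)\<bar>) < \<epsilon>"
    if family: "nonoverlapping_subintervals {a..b} n u v" and "(\<Sum>i<n. v i - u i) < \<delta>" for n u v
  proof -
    have "\<bar>1 / f (v i) - 1 / f (u i)\<bar> \<le> \<bar>f (v i) - f (u i)\<bar> / m\<^sup>2" if "i < n" for i
    proof -
      have "m \<le> f (u i)" "m \<le> f (v i)"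
        using family ge that by (auto simp: nonoverlapping_subintervals_def)
      then have prod: "m\<^sup>2 \<le> f (u i) * f (v i)" and pos: "0 < f (u i)" "0 < f (v i)"
        using \<open>0 < m\<close> by (auto simp: power2_eq_square intro: mult_mono)
      then have "\<bar>1 / f (v i) - 1 / f (u i)\<bar> = \<bar>f (v i) - f (u i)\<bar> / (f (u i) * f (v i))"
        by (simp add: field_simps abs_minus_commute)
      also have "\<dots> \<le> \<bar>f (v i) - f (u i)\<bar> / m\<^sup>2"
        using prod pos \<open>0 < m\<close> by (intro divide_left_mono) auto
      finally show ?thesis .
    qed
    then have "(\<Sum>i<n. \<bar>1 / f (v i) - 1 / f (u i)\<bar>) \<le> (\<Sum>i<n. \<bar>f (v i) - f (u i)\<bar>) / m\<^sup>2"
      unfolding sum_divide_distrib by (intro sum_mono) auto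
    also have "\<dots> < \<epsilon>"
      using small[OF that] \<open>0 < m\<close> by (simp add: divide_less_eq)
    finally show ?thesis .
  qed
  with \<open>0 < \<delta>\<close> show "\<exists>\<delta>>0. \<forall>n u v. nonoverlapping_subintervals {a..b} n u v \<longrightarrow>
      (\<Sum>i<n. v i - u i) < \<delta> \<longrightarrow> (\<Sum>i<n. \<bar>1 / f (v i) - 1 / f (u i)\<bar>) < \<epsilon>"
    by blast
qed

lemma real_interval_induct:
  fixes a b :: real
  assumes "a \<le> b" and "P a"
    and step: "\<And>t t'. a \<le> t \<Longrightarrow> t \<le> t' \<Longrightarrow> t' \<le> b \<Longrightarrow> P t \<Longrightarrow> R t t' \<Longrightarrow> P t'"
    and local: "\<And>c. a \<le> c \<Longrightarrow> c \<le> b \<Longrightarrow>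
      \<exists>\<eta>>0. (\<forall>t. c - \<eta> < t \<and> t \<le> c \<longrightarrow> R t c) \<and> (\<forall>t. c \<le> t \<and> t < c + \<eta> \<longrightarrow> R c t)"
  shows "P b"
proof -
  define S where "S = {t \<in> {a..b}. P t}"
  define c where "c = Sup S"
  have "a \<in> S" and bdd: "bdd_above S"
    using assms(1,2) by (auto simp: S_def bdd_above_def)
  then have "a \<le> c" and "c \<le> b"
    unfolding c_def by (auto intro: cSup_upper cSup_least simp: S_def)
  then obtain \<eta> where "0 < \<eta>" and left: "\<And>t. c - \<eta> < t \<Longrightarrow> t \<le> c \<Longrightarrow> R t c"
    and right: "\<And>t. c \<le> t \<Longrightarrow> t < c + \<eta> \<Longrightarrow> R c t"
    using local by blast
  obtain t where "t \<in> S" and "c - \<eta> < t"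
    using less_cSup_iff[of S "c - \<eta>"] \<open>a \<in> S\<close> bdd \<open>0 < \<eta>\<close> by (auto simp: c_def)
  moreover have "t \<le> c"
    using \<open>t \<in> S\<close> bdd by (simp add: c_def cSup_upper)
  ultimately have "P c"
    using step[of t c] left \<open>c \<le> b\<close> by (auto simp: S_def)
  have "c = b"
  proof (rule ccontr)
    assume "c \<noteq> b"
    define t' where "t' = min b (c + \<eta> / 2)"
    have "c < t'" "t' \<le> b"
      using \<open>c \<le> b\<close> \<open>c \<noteq> b\<close> \<open>0 < \<eta>\<close> by (auto simp: t'_def)
    then have "t' \<in> S"
      using step[OF \<open>a \<le> c\<close> _ _ \<open>P c\<close> right, of t'] \<open>a \<le> c\<close> \<open>0 < \<eta>\<close> by (auto simp: S_def t'_def)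
    then show False
      using \<open>c < t'\<close> bdd by (simp add: c_def cSup_upper leD)
  qed
  with \<open>P c\<close> show ?thesis
    by simp
qed

lemma DERIV_imp_local_increment_le:
  fixes g :: "real \<Rightarrow> real"
  assumes "(g has_real_derivative D) (at x)" and "D < L"
  shows "\<exists>\<eta>>0. (\<forall>y. x - \<eta> < y \<and> y \<le> x \<longrightarrow> g x - g y \<le> L * (x - y)) \<and>
                (\<forall>y. x \<le> y \<and> y < x + \<eta> \<longrightarrow> g y - g x \<le> L * (y - x))"
proof -
  obtain \<eta> where "0 < \<eta>"
    and close: "\<And>y. \<bar>y - x\<bar> < \<eta> \<Longrightarrow> \<bar>g y - g x - D * (y - x)\<bar> \<le> (L - D) * \<bar>y - x\<bar>"
    using assms unfolding has_field_derivative_def has_derivative_at_alt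
    by (metis diff_gt_0_iff_gt real_norm_def)
  have "g x - g y \<le> L * (x - y)" if "x - \<eta> < y" "y \<le> x" for y
    using close[of y] that by (simp add: abs_le_iff algebra_simps)
  moreover have "g y - g x \<le> L * (y - x)" if "x \<le> y" "y < x + \<eta>" for y
    using close[of y] that by (simp add: abs_le_iff algebra_simps)
  ultimately show ?thesis
    using \<open>0 < \<eta>\<close> by blast
qed

lemma null_sets_open_cover:
  assumes "N \<in> null_sets lborel" and "0 < \<delta>"
  obtains U where "open U" "N \<subseteq> U" "emeasure lborel U < ennreal \<delta>"
proof -
  have "N \<in> sets borel"
    using assms(1) by auto
  then obtain U where "open U" "N \<subseteq> U" "emeasure lborel (U - N) < \<delta>"
    using outer_regular_lborel \<open>0 < \<delta>\<close> by blast
  moreover have "emeasure lborel (U - N) = emeasure lborel U"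
    using assms(1) \<open>open U\<close> by (intro emeasure_Diff_null_set) auto
  ultimately show thesis
    using that by simp
qed

lemma sum_nonoverlapping_lengths_le:
  assumes "nonoverlapping_subintervals U n u v" and "U \<in> sets lborel"
  shows "ennreal (\<Sum>i<n. v i - u i) \<le> emeasure lborel U"
proof -
  have family: "\<forall>i<n. u i \<le> v i \<and> {u i..v i} \<subseteq> U"
    and nonoverlapping: "\<forall>i<n. \<forall>j<n. i \<noteq> j \<longrightarrow> v i \<le> u j \<or> v j \<le> u i"
    using assms(1) by (simp_all add: nonoverlapping_subintervals_def)
  have "ennreal (\<Sum>i<n. v i - u i) = (\<Sum>i<n. ennreal (v i - u i))"
    using family by (intro sum_ennreal[symmetric]) auto
  also have "\<dots> = (\<Sum>i<n. emeasure lborel {u i<..v i})"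
    using family by (intro sum.cong) auto
  also have "\<dots> = emeasure lborel (\<Union>i<n. {u i<..v i})"
  proof (rule sum_emeasure)
    show "disjoint_family_on (\<lambda>i. {u i<..v i}) {..<n}"
      using nonoverlapping unfolding disjoint_family_on_def by fastforce
  qed auto
  also have "\<dots> \<le> emeasure lborel U"
    using family \<open>U \<in> sets lborel\<close> by (intro emeasure_mono) fastforce+
  finally show ?thesis .
qed

lemma local_increment_le_off_open_set:
  fixes g :: "real \<Rightarrow> real"
  assumes "open U" and deriv: "c \<notin> U \<Longrightarrow> \<exists>D. (g has_real_derivative D) (at c) \<and> D < L"
  shows "\<exists>\<eta>>0. (\<forall>t. c - \<eta> < t \<and> t \<le> c \<longrightarrow> {t..c} \<subseteq> U \<or> g c - g t \<le> L * (c - t)) \<and>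
                (\<forall>t. c \<le> t \<and> t < c + \<eta> \<longrightarrow> {c..t} \<subseteq> U \<or> g t - g c \<le> L * (t - c))"
proof (cases "c \<in> U")
  case True
  then obtain \<eta> where "0 < \<eta>" "ball c \<eta> \<subseteq> U"
    using \<open>open U\<close> openE by blast
  then show ?thesis
    by (intro exI[of _ \<eta>]) (auto simp: dist_real_def subset_eq)
next
  case False
  then obtain D where "(g has_real_derivative D) (at c)" "D < L"
    using deriv by auto
  then show ?thesis
    using DERIV_imp_local_increment_le by blast
qed

lemma increment_le_off_open_set:
  fixes g :: "real \<Rightarrow> real"
  assumes "a \<le> b" and "0 \<le> L" and "open U"
    and deriv: "\<And>x. x \<in> {a..b} - U \<Longrightarrow> \<exists>D. (g has_real_derivative D) (at x) \<and> D < L"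
  shows "\<exists>n u v. nonoverlapping_subintervals (U \<inter> {a..b}) n u v \<and>
           g b - g a \<le> L * (b - a) + (\<Sum>i<n. \<bar>g (v i) - g (u i)\<bar>)"
  (is "?P b")
proof (rule real_interval_induct[where P = ?P
      and R = "\<lambda>t t'. {t..t'} \<subseteq> U \<or> g t' - g t \<le> L * (t' - t)"])
  show "?P a"
    by (rule exI[of _ 0]) (simp add: nonoverlapping_subintervals_def)
next
  fix t t'
  assume "a \<le> t" "t \<le> t'" "t' \<le> b" and "?P t"
    and step: "{t..t'} \<subseteq> U \<or> g t' - g t \<le> L * (t' - t)"
  then obtain n u v where family: "nonoverlapping_subintervals (U \<inter> {a..t}) n u v"
    and bound: "g t - g a \<le> L * (t - a) + (\<Sum>i<n. \<bar>g (v i) - g (u i)\<bar>)"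
    by blast
  have "L * (t - a) \<le> L * (t' - a)"
    using \<open>0 \<le> L\<close> \<open>t \<le> t'\<close> by (intro mult_left_mono) auto
  from step show "?P t'"
  proof
    assume "{t..t'} \<subseteq> U"
    have "nonoverlapping_subintervals (U \<inter> {a..t'}) (Suc n) (u(n := t)) (v(n := t'))"
      using family \<open>a \<le> t\<close> \<open>t \<le> t'\<close> \<open>{t..t'} \<subseteq> U\<close>
      by (intro nonoverlapping_subintervals_snoc[OF nonoverlapping_subintervals_mono] \<open>t \<le> t'\<close>) auto
    moreover have "g t' - g a \<le> L * (t' - a) + (\<Sum>i<Suc n. \<bar>g ((v(n := t')) i) - g ((u(n := t)) i)\<bar>)"
      using bound \<open>L * (t - a) \<le> L * (t' - a)\<close> by simp
    ultimately show "?P t'"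
      by blast
  next
    assume "g t' - g t \<le> L * (t' - t)"
    then have "g t' - g a \<le> L * (t' - a) + (\<Sum>i<n. \<bar>g (v i) - g (u i)\<bar>)"
      using bound by (simp add: algebra_simps)
    moreover have "nonoverlapping_subintervals (U \<inter> {a..t'}) n u v"
      using family \<open>t \<le> t'\<close> by (elim nonoverlapping_subintervals_mono) auto
    ultimately show "?P t'"
      by blast
  qed
next
  fix c
  assume "a \<le> c" "c \<le> b"
  then show "\<exists>\<eta>>0. (\<forall>t. c - \<eta> < t \<and> t \<le> c \<longrightarrow> {t..c} \<subseteq> U \<or> g c - g t \<le> L * (c - t)) \<and>
              (\<forall>t. c \<le> t \<and> t < c + \<eta> \<longrightarrow> {c..t} \<subseteq> U \<or> g t - g c \<le> L * (t - c))"
    using deriv by (intro local_increment_le_off_open_set[OF \<open>open U\<close>]) auto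
qed (use \<open>a \<le> b\<close> in auto)

text \<open>Off an open set U of small measure containing the exceptional null set, the slope of g
  stays below M + \<epsilon>; the increments of g across the subintervals lying in U are controlled by
  absolute continuity.\<close>

lemma abs_cont_on_diff_le_approx:
  fixes g :: "real \<Rightarrow> real"
  assumes ac: "abs_cont_on g a b" and "a \<le> b" and "0 \<le> M" and "0 < \<epsilon>" and "N \<in> null_sets lborel"
    and deriv: "\<And>x. x \<in> {a..b} - N \<Longrightarrow> \<exists>D. (g has_real_derivative D) (at x) \<and> D \<le> M"
  shows "g b - g a \<le> (M + \<epsilon>) * (b - a) + \<epsilon>"
proof -
  from ac \<open>0 < \<epsilon>\<close> obtain \<delta> where "0 < \<delta>" and small: "\<And>n u v.
      nonoverlapping_subintervals {a..b} n u v \<Longrightarrow> (\<Sum>i<n. v i - u i) < \<delta> \<Longrightarrow>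
      (\<Sum>i<n. \<bar>g (v i) - g (u i)\<bar>) < \<epsilon>"
    by (rule abs_cont_onD) auto
  obtain U where "open U" "N \<subseteq> U" and small_U: "emeasure lborel U < ennreal \<delta>"
    using null_sets_open_cover[OF \<open>N \<in> null_sets lborel\<close> \<open>0 < \<delta>\<close>] by blast
  have "\<exists>D. (g has_real_derivative D) (at x) \<and> D < M + \<epsilon>" if x: "x \<in> {a..b} - U" for x
  proof -
    obtain D where "(g has_real_derivative D) (at x)" "D \<le> M"
      using deriv[of x] x \<open>N \<subseteq> U\<close> by auto
    with \<open>0 < \<epsilon>\<close> show ?thesis
      by (intro exI[of _ D]) auto
  qed
  with \<open>a \<le> b\<close> \<open>0 \<le> M\<close> \<open>0 < \<epsilon>\<close> \<open>open U\<close> obtain n u v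
    where family: "nonoverlapping_subintervals (U \<inter> {a..b}) n u v"
      and bound: "g b - g a \<le> (M + \<epsilon>) * (b - a) + (\<Sum>i<n. \<bar>g (v i) - g (u i)\<bar>)"
    using increment_le_off_open_set[of a b "M + \<epsilon>" U g] by auto
  have "nonoverlapping_subintervals U n u v"
    using family by (rule nonoverlapping_subintervals_mono) auto
  then have "ennreal (\<Sum>i<n. v i - u i) < ennreal \<delta>"
    using sum_nonoverlapping_lengths_le[of U n u v] \<open>open U\<close> small_U by (auto intro: le_less_trans)
  moreover have "0 \<le> (\<Sum>i<n. v i - u i)"
    using family by (intro sum_nonneg) (auto simp: nonoverlapping_subintervals_def)
  ultimately have "(\<Sum>i<n. v i - u i) < \<delta>"
    by (simp add: ennreal_less_iff)
  moreover have "nonoverlapping_subintervals {a..b} n u v"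
    using family by (rule nonoverlapping_subintervals_mono) auto
  ultimately have "(\<Sum>i<n. \<bar>g (v i) - g (u i)\<bar>) < \<epsilon>"
    using small by blast
  with bound show ?thesis
    by simp
qed

lemma abs_cont_on_diff_le:
  fixes g :: "real \<Rightarrow> real"
  assumes ac: "abs_cont_on g a b" and "a \<le> b" and "0 \<le> M"
    and deriv: "AE x in lborel. a \<le> x \<longrightarrow> x \<le> b \<longrightarrow> (\<exists>D. (g has_real_derivative D) (at x) \<and> D \<le> M)"
  shows "g b - g a \<le> M * (b - a)"
proof (rule field_le_epsilon)
  obtain N where derivN': "\<And>x. x \<in> space lborel - N \<Longrightarrow>
      a \<le> x \<longrightarrow> x \<le> b \<longrightarrow> (\<exists>D. (g has_real_derivative D) (at x) \<and> D \<le> M)"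
    and "N \<in> null_sets lborel"
    using deriv by (rule AE_E3) blast
  then have derivN: "\<And>x. x \<in> {a..b} - N \<Longrightarrow> \<exists>D. (g has_real_derivative D) (at x) \<and> D \<le> M"
    by auto
  fix e :: real
  assume "0 < e"
  define \<epsilon> where "\<epsilon> = e / (b - a + 1)"
  have "0 < \<epsilon>"
    using \<open>0 < e\<close> \<open>a \<le> b\<close> by (simp add: \<epsilon>_def)
  have "g b - g a \<le> (M + \<epsilon>) * (b - a) + \<epsilon>"
    by (rule abs_cont_on_diff_le_approx[OF ac \<open>a \<le> b\<close> \<open>0 \<le> M\<close> \<open>0 < \<epsilon>\<close> \<open>N \<in> null_sets lborel\<close> derivN])
  also have "\<dots> = M * (b - a) + \<epsilon> * (b - a + 1)"
    by (simp add: algebra_simps)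
  also have "\<dots> = M * (b - a) + e"
    using \<open>a \<le> b\<close> by (simp add: \<epsilon>_def)
  finally show "g b - g a \<le> M * (b - a) + e" .
qed

lemma abs_cont_on_abs_diff_le:
  fixes g :: "real \<Rightarrow> real"
  assumes ac: "abs_cont_on g a b" and "a \<le> b" and "0 \<le> M"
    and deriv: "AE x in lborel. a \<le> x \<longrightarrow> x \<le> b \<longrightarrow> (\<exists>D. (g has_real_derivative D) (at x) \<and> \<bar>D\<bar> \<le> M)"
  shows "\<bar>g b - g a\<bar> \<le> M * (b - a)"
proof -
  have "g b - g a \<le> M * (b - a)"
    using deriv by (intro abs_cont_on_diff_le[OF ac \<open>a \<le> b\<close> \<open>0 \<le> M\<close>]) (auto elim!: eventually_mono)
  moreover have "(- g b) - (- g a) \<le> M * (b - a)"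
  proof (rule abs_cont_on_diff_le[where g = "\<lambda>x. - g x", OF _ \<open>a \<le> b\<close> \<open>0 \<le> M\<close>])
    show "abs_cont_on (\<lambda>x. - g x) a b"
      using ac by (simp add: abs_cont_on_uminus_iff)
    show "AE x in lborel. a \<le> x \<longrightarrow> x \<le> b \<longrightarrow> (\<exists>D. ((\<lambda>x. - g x) has_real_derivative D) (at x) \<and> D \<le> M)"
      using deriv by (elim eventually_mono) (auto intro: DERIV_minus)
  qed
  ultimately show ?thesis
    by linarith
qed

lemma loc_abs_cont_reciprocal_diff_le:
  fixes f f' :: "real \<Rightarrow> real"
  assumes ac: "loc_abs_cont f" and pos: "\<And>x. 0 < f x"
    and deriv: "AE x in lborel. (f has_real_derivative f' x) (at x)"
    and "x \<le> t" and "0 \<le> B" and bound: "\<And>\<xi>. \<xi> \<in> {x..t} \<Longrightarrow> \<bar>f' \<xi>\<bar> / (f \<xi>)\<^sup>2 \<le> B"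
  shows "\<bar>1 / f t - 1 / f x\<bar> \<le> B * (t - x)"
proof (rule abs_cont_on_abs_diff_le[OF _ \<open>x \<le> t\<close> \<open>0 \<le> B\<close>])
  obtain \<xi>\<^sub>0 where "\<xi>\<^sub>0 \<in> {x..t}" and min: "\<And>\<xi>. \<xi> \<in> {x..t} \<Longrightarrow> f \<xi>\<^sub>0 \<le> f \<xi>"
    using continuous_attains_inf[of "{x..t}" f] \<open>x \<le> t\<close>
      continuous_on_subset[OF loc_abs_cont_imp_continuous[OF ac]] by auto
  show "abs_cont_on (\<lambda>\<xi>. 1 / f \<xi>) x t"
    using ac pos min unfolding loc_abs_cont_def by (blast intro: abs_cont_on_inverse)
  have "((\<lambda>\<xi>. 1 / f \<xi>) has_real_derivative - f' \<xi> / (f \<xi>)\<^sup>2) (at \<xi>)"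
    if "(f has_real_derivative f' \<xi>) (at \<xi>)" for \<xi>
    using DERIV_inverse_fun[OF that] pos[of \<xi>]
    by (simp add: inverse_eq_divide power2_eq_square)
  then show "AE \<xi> in lborel. x \<le> \<xi> \<longrightarrow> \<xi> \<le> t \<longrightarrow>
      (\<exists>D. ((\<lambda>\<xi>. 1 / f \<xi>) has_real_derivative D) (at \<xi>) \<and> \<bar>D\<bar> \<le> B)"
    using deriv by (elim eventually_mono) (force simp: bound)
qed

section \<open>The integrals Q and J\<close>

lemma loc_integrable_integrable_on: "loc_integrable f \<Longrightarrow> f integrable_on {a..b}"
  using set_borel_integral_eq_integral(1) unfolding loc_integrable_def by blast

lemma loc_integrable_LBINT_eq_integral:
  "loc_integrable f \<Longrightarrow> a \<le> b \<Longrightarrow> (LBINT x=a..b. f x) = integral {a..b} f"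
  using set_borel_integral_eq_integral(2) interval_integral_Icc unfolding loc_integrable_def by metis

lemma loc_integrable_divide:
  fixes f g :: "real \<Rightarrow> real"
  assumes f: "loc_integrable f" and g: "continuous_on UNIV g" "\<And>x. 0 < g x"
  shows "loc_integrable (\<lambda>x. f x / g x)"
  unfolding loc_integrable_def
proof (intro allI)
  fix a b :: real
  show "set_integrable lborel {a..b} (\<lambda>x. f x / g x)"
  proof (cases "a \<le> b")
    case False
    then show ?thesis
      by (simp add: set_integrable_def)
  next
    case True
    then obtain x\<^sub>0 where min: "\<forall>x\<in>{a..b}. g x\<^sub>0 \<le> g x"
      using continuous_attains_inf[of "{a..b}" g] continuous_on_subset[OF g(1)] by auto
    have f_int: "set_integrable lborel {a..b} f"
      using f by (simp add: loc_integrable_def)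
    then have int0: "set_integrable lborel {a..b} (\<lambda>x. f x / g x\<^sub>0)"
      using g(2)[of x\<^sub>0] by simp
    have meas: "set_borel_measurable lborel {a..b} (\<lambda>x. f x / g x)"
    proof -
      have "(\<lambda>x. indicator {a..b} x *\<^sub>R f x) \<in> borel_measurable lborel"
        using f_int by (simp add: set_integrable_def borel_measurable_integrable)
      moreover have "continuous_on UNIV (\<lambda>x. 1 / g x)"
        using g by (intro continuous_intros) (auto simp: less_imp_neq[symmetric])
      then have "(\<lambda>x. 1 / g x) \<in> borel_measurable lborel"
        by (simp add: borel_measurable_continuous_onI)
      ultimately have "(\<lambda>x. (indicator {a..b} x *\<^sub>R f x) * (1 / g x)) \<in> borel_measurable lborel"
        by (rule borel_measurable_times)
      then show ?thesis
        by (simp add: set_borel_measurable_def)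
    qed
    have bound: "\<bar>f x / g x\<bar> \<le> \<bar>f x / g x\<^sub>0\<bar>" if "x \<in> {a..b}" for x
    proof -
      have "g x\<^sub>0 \<le> g x" "0 < g x\<^sub>0" "0 < g x"
        using min that g(2) by auto
      then have "\<bar>f x\<bar> / g x \<le> \<bar>f x\<bar> / g x\<^sub>0"
        by (intro divide_left_mono) auto
      with \<open>0 < g x\<^sub>0\<close> \<open>0 < g x\<close> show ?thesis
        by (simp add: abs_divide)
    qed
    show ?thesis
      by (intro set_integrable_bound[OF int0 meas] AE_I2 impI) (simp only: real_norm_def bound)
  qed
qed

locale nonneg_potential =
  fixes q :: "real \<Rightarrow> real"
  assumes nonneg: "\<And>x. 0 \<le> q x" and loc_int: "loc_integrable q"
begin

lemmas integrable = loc_integrable_integrable_on[OF loc_int]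

definition Q :: "real \<Rightarrow> real \<Rightarrow> real" where
  "Q x t = integral {x..t} q"

text \<open>The truncations are finite, whereas J may a priori be infinite; the supremum argument for
  the upper bound needs finite quantities.\<close>

definition J_upto :: "real \<Rightarrow> real \<Rightarrow> real" where
  "J_upto T x = integral {x..T} (\<lambda>t. exp (- Q x t))"

lemma Q_nonneg: "0 \<le> Q x t"
  unfolding Q_def using integrable nonneg by (intro integral_nonneg) auto

lemma Q_eq_0: "t \<le> x \<Longrightarrow> Q x t = 0"
  unfolding Q_def by (cases "t = x") auto

lemma Q_add: "x \<le> y \<Longrightarrow> y \<le> t \<Longrightarrow> Q x t = Q x y + Q y t"
  unfolding Q_def by (metis Henstock_Kurzweil_Integration.integral_combine integrable)

lemma Q_le_Q: "a \<le> x \<Longrightarrow> x \<le> t \<Longrightarrow> t \<le> b \<Longrightarrow> Q x t \<le> Q a b"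
  using Q_add[of a x b] Q_add[of x t b] Q_nonneg[of a x] Q_nonneg[of t b] by linarith

lemma mono_Q: "mono (Q x)"
proof
  fix t t' :: real
  assume "t \<le> t'"
  then show "Q x t \<le> Q x t'"
    using Q_add[of x t t'] Q_eq_0[of t x] Q_nonneg[of x t'] Q_nonneg[of t t']
    by (cases "t \<le> x") auto
qed

lemma exp_Q_integrable: "(\<lambda>t. exp (- Q x t)) integrable_on {x..T}"
  unfolding Q_def
  by (intro integrable_continuous_interval continuous_intros indefinite_integral_continuous_1
      integrable)

lemma J_upto_nonneg: "0 \<le> J_upto T x"
  unfolding J_upto_def using exp_Q_integrable by (intro integral_nonneg) auto

lemma J_upto_le: "J_upto T x \<le> max 0 (T - x)"
proof -
  have "J_upto T x \<le> integral {x..T} (\<lambda>t. 1 :: real)"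
    unfolding J_upto_def using exp_Q_integrable Q_nonneg by (intro integral_le) auto
  then show ?thesis
    by (simp add: content_real_if max_def split: if_splits)
qed

lemma J_upto_eq_0: "T \<le> x \<Longrightarrow> J_upto T x = 0"
  using J_upto_le[of T x] J_upto_nonneg[of T x] by simp

lemma J_upto_split_le:
  assumes "x \<le> z"
  shows "J_upto T x \<le> (z - x) + exp (- Q x z) * J_upto T z"
proof (cases "T \<le> z")
  case True
  then have "J_upto T x \<le> z - x"
    using J_upto_le[of T x] \<open>x \<le> z\<close> by linarith
  moreover have "0 \<le> exp (- Q x z) * J_upto T z"
    using J_upto_nonneg[of T z] by simp
  ultimately show ?thesis
    by linarith
next
  case False
  have "(\<lambda>t. exp (- Q x t)) integrable_on {x..z}"
    using False by (intro integrable_subinterval_real[OF exp_Q_integrable[of x T]]) auto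
  then have "integral {x..z} (\<lambda>t. exp (- Q x t)) \<le> integral {x..z} (\<lambda>t. 1)"
    using Q_nonneg by (intro integral_le) auto
  also have "\<dots> = z - x"
    using \<open>x \<le> z\<close> by simp
  moreover have
    "J_upto T x = integral {x..z} (\<lambda>t. exp (- Q x t)) + integral {z..T} (\<lambda>t. exp (- Q x t))"
    unfolding J_upto_def using exp_Q_integrable False \<open>x \<le> z\<close>
    by (intro Henstock_Kurzweil_Integration.integral_combine[symmetric]) auto
  moreover have "integral {z..T} (\<lambda>t. exp (- Q x t)) = exp (- Q x z) * J_upto T z"
  proof -
    have "exp (- Q x t) = exp (- Q x z) * exp (- Q z t)" if "t \<in> {z..T}" for t
    proof -
      have "Q x t = Q x z + Q z t"
        using Q_add[of x z t] \<open>x \<le> z\<close> that by simp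
      then show ?thesis
        by (simp add: exp_diff exp_minus field_simps)
    qed
    then have "integral {z..T} (\<lambda>t. exp (- Q x t)) =
        integral {z..T} (\<lambda>t. exp (- Q x z) * exp (- Q z t))"
      by (rule integral_cong)
    also have "\<dots> = exp (- Q x z) * J_upto T z"
      unfolding J_upto_def by (rule integral_mult_right)
    finally show ?thesis .
  qed
  ultimately show ?thesis
    by linarith
qed

lemma J_upto_ge: "x \<le> T \<Longrightarrow> (T - x) * exp (- Q x T) \<le> J_upto T x"
proof -
  assume "x \<le> T"
  have "exp (- Q x T) \<le> exp (- Q x t)" if "t \<in> {x..T}" for t
    using monoD[OF mono_Q, of t T] that by simp
  then have "integral {x..T} (\<lambda>t. exp (- Q x T)) \<le> J_upto T x"
    unfolding J_upto_def using exp_Q_integrable by (intro integral_le) auto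
  with \<open>x \<le> T\<close> show ?thesis
    by simp
qed

text \<open>Since Q x vanishes left of x, it is monotone on the whole line, hence measurable.\<close>

lemma borel_measurable_Q [measurable]: "Q x \<in> borel_measurable borel"
  using mono_Q by (rule borel_measurable_mono)

lemma J_eq_nn_integral: "J q x = (\<integral>\<^sup>+ t. indicator {x..} t * ennreal (exp (- Q x t)) \<partial>lborel)"
  unfolding J_def
  by (intro nn_integral_cong)
    (simp add: loc_integrable_LBINT_eq_integral[OF loc_int] Q_def split: split_indicator)

lemma nn_integral_J_upto:
  "(\<integral>\<^sup>+ t. indicator {x..T} t * ennreal (exp (- Q x t)) \<partial>lborel) = ennreal (J_upto T x)"
  unfolding J_upto_def
  using nn_integral_has_integral_lebesgue'[OF _ integrable_integral[OF exp_Q_integrable]]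
  by (simp add: mult.commute)

lemma J_upto_le_J: "ennreal (J_upto T x) \<le> J q x"
  unfolding J_eq_nn_integral nn_integral_J_upto[symmetric]
  by (intro nn_integral_mono) (simp split: split_indicator)

lemma J_le_if_J_upto_le:
  assumes "\<And>T. J_upto T x \<le> B"
  shows "J q x \<le> ennreal B"
proof -
  have SUP_indicator: "(SUP n. indicator {x..real n} t * e) = indicator {x..} t * e"
    for t :: real and e :: ennreal
  proof (rule antisym)
    show "(SUP n. indicator {x..real n} t * e) \<le> indicator {x..} t * e"
      by (intro SUP_least) (simp split: split_indicator)
    obtain n :: nat where "t \<le> real n"
      using real_arch_simple by blast
    then have "indicator {x..} t * e = indicator {x..real n} t * e"
      by (simp split: split_indicator)
    then show "indicator {x..} t * e \<le> (SUP n. indicator {x..real n} t * e)"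
      using SUP_upper[of n UNIV "\<lambda>n. indicator {x..real n} t * e"] by simp
  qed
  have "J q x = (SUP n. \<integral>\<^sup>+ t. indicator {x..real n} t * ennreal (exp (- Q x t)) \<partial>lborel)"
    unfolding J_eq_nn_integral SUP_indicator[symmetric]
  proof (rule nn_integral_monotone_convergence_SUP)
    show "incseq (\<lambda>n t. indicator {x..real n} t * ennreal (exp (- Q x t)))"
      by (intro incseq_SucI le_funI mult_right_mono) (auto split: split_indicator)
  qed measurable
  also have "\<dots> \<le> ennreal B"
    unfolding nn_integral_J_upto using assms by (intro SUP_least ennreal_leI)
  finally show ?thesis .
qed

lemma J_lower_bound:
  fixes q1 :: "real \<Rightarrow> real"
  assumes q1_cont: "continuous_on UNIV q1" and q1_pos: "\<And>x. 0 < q1 x"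
    and local_bound: "\<And>x. R \<le> \<bar>x\<bar> \<Longrightarrow> Q x (x + 1 / q1 x) \<le> L"
  shows "\<exists>c>0. \<forall>x. ennreal (c / q1 x) \<le> J q x"
proof -
  obtain x\<^sub>0 where "x\<^sub>0 \<in> {-\<bar>R\<bar>..\<bar>R\<bar>}" and min: "\<And>x. x \<in> {-\<bar>R\<bar>..\<bar>R\<bar>} \<Longrightarrow> q1 x\<^sub>0 \<le> q1 x"
    using continuous_attains_inf[of "{-\<bar>R\<bar>..\<bar>R\<bar>}" q1] continuous_on_subset[OF q1_cont] by auto
  define W where "W = Q (-\<bar>R\<bar>) (\<bar>R\<bar> + 1)"
  define c where "c = min (exp (- L)) (exp (- W) * q1 x\<^sub>0)"
  have "c / q1 x \<le> J_upto (x + 1 / q1 x) x \<or> c / q1 x \<le> J_upto (x + 1) x" for x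
  proof (cases "R \<le> \<bar>x\<bar>")
    case True
    have "c / q1 x \<le> 1 / q1 x * exp (- Q x (x + 1 / q1 x))"
      using local_bound[OF True] q1_pos[of x] by (auto simp: c_def divide_right_mono min_le_iff_disj)
    also have "\<dots> \<le> J_upto (x + 1 / q1 x) x"
      using J_upto_ge[of x "x + 1 / q1 x"] q1_pos[of x] by simp
    finally show ?thesis ..
  next
    case False
    then have x: "x \<in> {-\<bar>R\<bar>..\<bar>R\<bar>}"
      by auto
    have "c \<le> exp (- W) * q1 x\<^sub>0"
      by (simp add: c_def)
    also have "\<dots> \<le> exp (- W) * q1 x"
      using min[OF x] by simp
    finally have "c \<le> exp (- W) * q1 x" .
    moreover have "exp (- W) \<le> exp (- Q x (x + 1))"
      using x Q_le_Q[of "-\<bar>R\<bar>" x "x + 1" "\<bar>R\<bar> + 1"] by (simp add: W_def)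
    ultimately have "c / q1 x \<le> exp (- Q x (x + 1))"
      using q1_pos[of x] by (simp add: divide_le_eq mult.commute order_trans)
    also have "\<dots> \<le> J_upto (x + 1) x"
      using J_upto_ge[of x "x + 1"] by simp
    finally show ?thesis ..
  qed
  then have "ennreal (c / q1 x) \<le> J q x" for x
    using J_upto_le_J order_trans ennreal_leI by metis
  moreover have "0 < c"
    using q1_pos by (simp add: c_def)
  ultimately show ?thesis
    by blast
qed

lemma Q_between_multiples:
  fixes q1 :: "real \<Rightarrow> real"
  assumes "0 < a" and comparable: "\<And>\<xi>. \<xi> \<in> {x..t} \<Longrightarrow> a \<le> q1 \<xi> \<and> q1 \<xi> \<le> b"
    and int: "(\<lambda>\<xi>. q \<xi> / q1 \<xi>) integrable_on {x..t}"
  shows "a * integral {x..t} (\<lambda>\<xi>. q \<xi> / q1 \<xi>) \<le> Q x t \<and>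
    Q x t \<le> b * integral {x..t} (\<lambda>\<xi>. q \<xi> / q1 \<xi>)"
proof -
  have pos: "0 < q1 \<xi>" if "\<xi> \<in> {x..t}" for \<xi>
    using comparable[OF that] \<open>0 < a\<close> by linarith
  have "integral {x..t} (\<lambda>\<xi>. a * (q \<xi> / q1 \<xi>)) \<le> Q x t"
    unfolding Q_def
  proof (intro integral_le integrable integrable_on_mult_right int)
    fix \<xi>
    assume "\<xi> \<in> {x..t}"
    then have "a \<le> q1 \<xi>" "0 < q1 \<xi>"
      using comparable pos by auto
    then have "a * (q \<xi> / q1 \<xi>) \<le> q1 \<xi> * (q \<xi> / q1 \<xi>)"
      using nonneg[of \<xi>] by (intro mult_right_mono) auto
    with \<open>0 < q1 \<xi>\<close> show "a * (q \<xi> / q1 \<xi>) \<le> q \<xi>"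
      by simp
  qed
  moreover have "Q x t \<le> integral {x..t} (\<lambda>\<xi>. b * (q \<xi> / q1 \<xi>))"
    unfolding Q_def
  proof (intro integral_le integrable integrable_on_mult_right int)
    fix \<xi>
    assume "\<xi> \<in> {x..t}"
    then have "q1 \<xi> \<le> b" "0 < q1 \<xi>"
      using comparable pos by auto
    then have "q1 \<xi> * (q \<xi> / q1 \<xi>) \<le> b * (q \<xi> / q1 \<xi>)"
      using nonneg[of \<xi>] by (intro mult_right_mono) auto
    with \<open>0 < q1 \<xi>\<close> show "q \<xi> \<le> b * (q \<xi> / q1 \<xi>)"
      by simp
  qed
  ultimately show ?thesis
    unfolding integral_mult_right by (rule conjI)
qed

lemma Q_comparison:
  fixes q1 q2 :: "real \<Rightarrow> real" and a b K :: real
  assumes split: "\<And>\<xi>. q \<xi> = q1 \<xi> + q2 \<xi>" and "x \<le> t" and "0 < a"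
    and comparable: "\<And>\<xi>. \<xi> \<in> {x..t} \<Longrightarrow> a \<le> q1 \<xi> \<and> q1 \<xi> \<le> b"
    and ratio_int: "(\<lambda>\<xi>. q2 \<xi> / q1 \<xi>) integrable_on {x..t}"
    and ratio_bound: "\<bar>q1 t * integral {x..t} (\<lambda>\<xi>. q2 \<xi> / q1 \<xi>)\<bar> \<le> K"
  shows "a * (t - x) - a * (K / q1 t) \<le> Q x t \<and> Q x t \<le> b * (t - x) + b * (K / q1 t)"
proof -
  define F where "F = integral {x..t} (\<lambda>\<xi>. q2 \<xi> / q1 \<xi>)"
  have pos: "0 < q1 \<xi>" if "\<xi> \<in> {x..t}" for \<xi>
    using comparable[OF that] \<open>0 < a\<close> by linarith
  have "q1 t * \<bar>F\<bar> \<le> K"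
    using ratio_bound pos[of t] \<open>x \<le> t\<close> by (simp add: F_def abs_mult)
  then have "\<bar>F\<bar> \<le> K / q1 t"
    using pos[of t] \<open>x \<le> t\<close> by (simp add: le_divide_eq mult.commute)
  moreover have "0 \<le> b"
    using comparable[of t] \<open>x \<le> t\<close> \<open>0 < a\<close> by auto
  ultimately have F_bounds: "a * \<bar>F\<bar> \<le> a * (K / q1 t)" "b * \<bar>F\<bar> \<le> b * (K / q1 t)"
    "b * F \<le> b * \<bar>F\<bar>" "- (a * F) \<le> a * \<bar>F\<bar>"
    using \<open>0 < a\<close> mult_left_mono[of "\<bar>F\<bar>" "K / q1 t"] mult_left_mono[of F "\<bar>F\<bar>" b]
      mult_left_mono[of "- F" "\<bar>F\<bar>" a] by auto
  have ratio_eq: "q \<xi> / q1 \<xi> = 1 + q2 \<xi> / q1 \<xi>" if "\<xi> \<in> {x..t}" for \<xi>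
    using split[of \<xi>] pos[OF that] by (simp add: field_simps)
  have "(\<lambda>\<xi>. 1 + q2 \<xi> / q1 \<xi>) integrable_on {x..t}"
    by (intro integrable_add integrable_const_ivl ratio_int)
  then have "(\<lambda>\<xi>. q \<xi> / q1 \<xi>) integrable_on {x..t}"
    by (rule integrable_eq) (simp add: ratio_eq)
  then have between: "a * integral {x..t} (\<lambda>\<xi>. q \<xi> / q1 \<xi>) \<le> Q x t"
    "Q x t \<le> b * integral {x..t} (\<lambda>\<xi>. q \<xi> / q1 \<xi>)"
    using Q_between_multiples[OF \<open>0 < a\<close> comparable] by auto
  have "integral {x..t} (\<lambda>\<xi>. q \<xi> / q1 \<xi>) = integral {x..t} (\<lambda>\<xi>. 1 + q2 \<xi> / q1 \<xi>)"
    using ratio_eq by (rule integral_cong)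
  also have "\<dots> = (t - x) + F"
    using integral_add[OF integrable_const_ivl ratio_int] \<open>x \<le> t\<close> by (simp add: F_def)
  finally have "a * (t - x) + a * F \<le> Q x t" "Q x t \<le> b * (t - x) + b * F"
    using between by (simp_all add: distrib_left)
  with F_bounds show ?thesis
    by linarith
qed

end

section \<open>The upper bound\<close>

lemma bounded_by_halving:
  fixes m Z :: "'a \<Rightarrow> real"
  assumes bdd: "bdd_above (m ` S)" and "y \<in> S" and "0 \<le> H" and "0 \<le> C"
    and step: "\<And>x. x \<in> S \<Longrightarrow> m x \<le> H + Z x / 2"
    and Z: "\<And>x. x \<in> S \<Longrightarrow> Z x \<le> C \<or> (\<exists>x'\<in>S. Z x \<le> m x')"
  shows "m y \<le> 2 * H + C"
proof -
  define M where "M = Sup (m ` S)"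
  have le_M: "m x \<le> M" if "x \<in> S" for x
    unfolding M_def using bdd that by (intro cSup_upper) auto
  have "m x \<le> H + max C M / 2" if "x \<in> S" for x
  proof -
    have "Z x \<le> max C M"
      using Z[OF that] le_M by force
    with step[OF that] show ?thesis
      by linarith
  qed
  then have "M \<le> H + max C M / 2"
    unfolding M_def using \<open>y \<in> S\<close> by (intro cSup_least) auto
  then have "M \<le> 2 * H + C"
    using \<open>0 \<le> H\<close> \<open>0 \<le> C\<close> by (cases "M \<le> C") (auto simp: max_def)
  with le_M[OF \<open>y \<in> S\<close>] show ?thesis
    by linarith
qed

lemma continuous_bounded_on_interval:
  fixes f :: "real \<Rightarrow> real"
  assumes "continuous_on UNIV f"
  obtains M where "\<And>x. x \<in> {a..b} \<Longrightarrow> f x \<le> M"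
proof -
  have "compact (f ` {a..b})"
    using continuous_on_subset[OF assms] by (intro compact_continuous_image) auto
  then have "bdd_above (f ` {a..b})"
    by (intro bounded_imp_bdd_above compact_imp_bounded)
  then obtain M where "\<And>x. x \<in> {a..b} \<Longrightarrow> f x \<le> M"
    unfolding bdd_above_def by blast
  then show thesis
    by (rule that)
qed

locale halving_weight = nonneg_potential q for q +
  fixes q1 :: "real \<Rightarrow> real" and R H :: real
  assumes q1_cont: "continuous_on UNIV q1" and q1_pos: "\<And>x. 0 < q1 x"
    and R_nonneg: "0 \<le> R" and H_nonneg: "0 \<le> H"
    and halving: "\<And>x. R \<le> \<bar>x\<bar> \<Longrightarrow> exp (- Q x (x + H / q1 x)) * q1 x \<le> q1 (x + H / q1 x) / 2"
begin

definition step :: "real \<Rightarrow> real" where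
  "step x = x + H / q1 x"

definition scaled_J_upto :: "real \<Rightarrow> real \<Rightarrow> real" where
  "scaled_J_upto T x = J_upto T x * q1 x"

lemma le_step: "x \<le> step x"
  using H_nonneg q1_pos[of x] by (simp add: step_def)

lemma scaled_J_upto_eq_0: "T \<le> x \<Longrightarrow> scaled_J_upto T x = 0"
  by (simp add: scaled_J_upto_def J_upto_eq_0)

lemma scaled_J_upto_step:
  assumes "R \<le> \<bar>x\<bar>"
  shows "scaled_J_upto T x \<le> H + scaled_J_upto T (step x) / 2"
proof -
  have "J_upto T x \<le> H / q1 x + exp (- Q x (step x)) * J_upto T (step x)"
    using J_upto_split_le[OF le_step[of x], of T] by (simp add: step_def)
  then have "J_upto T x * q1 x \<le> H + exp (- Q x (step x)) * q1 x * J_upto T (step x)"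
    using q1_pos[of x] by (simp add: field_simps)
  also have "\<dots> \<le> H + q1 (step x) / 2 * J_upto T (step x)"
    using halving[OF assms] J_upto_nonneg
    by (intro add_left_mono mult_right_mono) (auto simp: step_def)
  finally show ?thesis
    by (simp add: scaled_J_upto_def mult.commute)
qed

lemma bdd_above_scaled_J_upto: "bdd_above (scaled_J_upto T ` {a..b})"
proof -
  obtain M where M: "\<And>x. x \<in> {a..b} \<Longrightarrow> q1 x \<le> M"
    using continuous_bounded_on_interval[OF q1_cont] by blast
  have "scaled_J_upto T x \<le> max 0 (T - a) * M" if "x \<in> {a..b}" for x
    unfolding scaled_J_upto_def
    using that J_upto_le[of T x] J_upto_nonneg[of T x] q1_pos[of x] M[OF that]
    by (intro mult_mono) auto
  then show ?thesis
    by (intro bdd_aboveI2) blast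
qed

lemma scaled_J_upto_le_right: "R \<le> x \<Longrightarrow> scaled_J_upto T x \<le> 2 * H"
proof (cases "T \<le> x")
  case True
  then show ?thesis
    using H_nonneg by (simp add: scaled_J_upto_eq_0)
next
  case False
  assume "R \<le> x"
  have "scaled_J_upto T x \<le> 2 * H + 0"
  proof (rule bounded_by_halving[where m = "scaled_J_upto T" and y = x and S = "{R..T}"
        and Z = "\<lambda>x. scaled_J_upto T (step x)"])
    fix z
    assume "z \<in> {R..T}"
    then show "scaled_J_upto T z \<le> H + scaled_J_upto T (step z) / 2"
      using R_nonneg by (intro scaled_J_upto_step) auto
    show "scaled_J_upto T (step z) \<le> 0 \<or>
        (\<exists>z'\<in>{R..T}. scaled_J_upto T (step z) \<le> scaled_J_upto T z')"
      using \<open>z \<in> {R..T}\<close> le_step[of z] by (cases "step z \<le> T") (auto simp: scaled_J_upto_eq_0)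
  qed (use \<open>R \<le> x\<close> False H_nonneg bdd_above_scaled_J_upto in auto)
  then show ?thesis
    by simp
qed

lemma scaled_J_upto_bounded_right: "\<exists>C\<ge>0. \<forall>T x. -R \<le> x \<longrightarrow> scaled_J_upto T x \<le> C"
proof -
  obtain M where M: "\<And>x. x \<in> {-R..R} \<Longrightarrow> q1 x \<le> M"
    using continuous_bounded_on_interval[OF q1_cont] by blast
  define C where "C = max (2 * H) ((2 * R + 2 * H / q1 R) * M)"
  have "scaled_J_upto T x \<le> C" if "-R \<le> x" for T x
  proof (cases "R \<le> x")
    case True
    then show ?thesis
      using scaled_J_upto_le_right[OF True, of T] by (simp add: C_def)
  next
    case False
    have "J_upto T x \<le> (R - x) + exp (- Q x R) * J_upto T R"
      using False by (intro J_upto_split_le) simp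
    also have "\<dots> \<le> 2 * R + J_upto T R"
      using that Q_nonneg[of x R] J_upto_nonneg[of T R]
      by (intro add_mono mult_left_le_one_le) auto
    also have "J_upto T R \<le> 2 * H / q1 R"
      using scaled_J_upto_le_right[of R T] q1_pos[of R] by (simp add: scaled_J_upto_def field_simps)
    finally have "scaled_J_upto T x \<le> (2 * R + 2 * H / q1 R) * M"
      unfolding scaled_J_upto_def using that False M[of x] q1_pos[of x] J_upto_nonneg[of T x]
      by (intro mult_mono) auto
    then show ?thesis
      by (simp add: C_def)
  qed
  moreover have "0 \<le> C"
    using H_nonneg by (simp add: C_def)
  ultimately show ?thesis
    by blast
qed

lemma scaled_J_upto_bounded: "\<exists>C. \<forall>T x. scaled_J_upto T x \<le> C"
proof -
  obtain C where "0 \<le> C" and right: "\<And>T x. -R \<le> x \<Longrightarrow> scaled_J_upto T x \<le> C"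
    using scaled_J_upto_bounded_right by blast
  have "scaled_J_upto T x \<le> 2 * H + C" for T x
  proof (cases "-R \<le> x")
    case True
    then show ?thesis
      using right[OF True, of T] H_nonneg by linarith
  next
    case False
    show ?thesis
    proof (rule bounded_by_halving[where m = "scaled_J_upto T" and y = x and S = "{x..-R}"
          and Z = "\<lambda>x. scaled_J_upto T (step x)"])
      fix z
      assume "z \<in> {x..-R}"
      then show "scaled_J_upto T z \<le> H + scaled_J_upto T (step z) / 2"
        using R_nonneg by (intro scaled_J_upto_step) auto
      show "scaled_J_upto T (step z) \<le> C \<or>
          (\<exists>z'\<in>{x..-R}. scaled_J_upto T (step z) \<le> scaled_J_upto T z')"
        using \<open>z \<in> {x..-R}\<close> le_step[of z] right[of "step z" T] by (cases "step z \<le> -R") auto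
    qed (use False H_nonneg \<open>0 \<le> C\<close> bdd_above_scaled_J_upto in auto)
  qed
  then show ?thesis
    by blast
qed

lemma J_upper_bound: "\<exists>C. \<forall>x. J q x \<le> ennreal (C / q1 x)"
proof -
  obtain C where "\<And>T x. scaled_J_upto T x \<le> C"
    using scaled_J_upto_bounded by blast
  then have "J_upto T x \<le> C / q1 x" for T x
    using q1_pos[of x] by (simp add: scaled_J_upto_def field_simps)
  then show ?thesis
    using J_le_if_J_upto_le by blast
qed

end

section \<open>Local behaviour of q1 and Q far out\<close>

lemma eventually_at_infinity_absE:
  assumes "eventually P (at_infinity :: real filter)"
  obtains R where "0 \<le> R" and "\<And>x. R \<le> \<bar>x\<bar> \<Longrightarrow> P x"
proof -
  obtain b where "\<And>x. b \<le> \<bar>x\<bar> \<Longrightarrow> P x"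
    using assms by (auto simp: eventually_at_infinity)
  then show thesis
    by (intro that[of "max b 0"]) auto
qed

lemma eventually_forall_Delta:
  fixes s q1 :: "real \<Rightarrow> real"
  assumes s_pos: "\<And>x. 0 < s x" and q1_pos: "\<And>x. 0 < q1 x"
    and small: "((\<lambda>x. s x / (x * q1 x)) \<longlongrightarrow> 0) at_infinity"
    and P: "eventually P at_infinity"
  shows "\<forall>\<^sub>F x in at_infinity. \<forall>t\<in>Delta s q1 x. P t"
proof -
  obtain b where b: "\<And>t. b \<le> \<bar>t\<bar> \<Longrightarrow> P t"
    using P by (auto simp: eventually_at_infinity)
  have "\<forall>\<^sub>F x in at_infinity. \<bar>s x / (x * q1 x)\<bar> < 1 / 2"
    using tendstoD[OF small, of "1 / 2"] by simp
  moreover have "\<forall>\<^sub>F x in at_infinity. 2 * max b 1 \<le> \<bar>x\<bar>"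
    by (auto simp: eventually_at_infinity)
  ultimately show ?thesis
  proof eventually_elim
    case (elim x)
    then have "s x / q1 x < \<bar>x\<bar> / 2"
      using s_pos[of x] q1_pos[of x] by (simp add: abs_divide abs_mult field_simps)
    have "b \<le> \<bar>t\<bar>" if "t \<in> Delta s q1 x" for t
    proof -
      have "\<bar>t - x\<bar> \<le> s x / q1 x" and "\<bar>x\<bar> \<le> \<bar>t\<bar> + \<bar>t - x\<bar>"
        using that abs_triangle_ineq4[of t "t - x"] by (auto simp: Delta_def abs_le_iff)
      moreover have "b \<le> max b 1"
        by simp
      ultimately show ?thesis
        using \<open>s x / q1 x < \<bar>x\<bar> / 2\<close> elim(2) by linarith
    qed
    then show ?case
      using b by blast
  qed
qed

lemma eventually_Icc_subset_Delta:
  fixes s q1 :: "real \<Rightarrow> real"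
  assumes "filterlim s at_top at_infinity" and "\<And>x. 0 < q1 x"
  shows "\<forall>\<^sub>F x in at_infinity. {x..x + H / q1 x} \<subseteq> Delta s q1 x"
  using filterlim_at_top_dense[THEN iffD1, OF assms(1), rule_format, of "max H 0"]
proof eventually_elim
  case (elim x)
  then have "H / q1 x \<le> s x / q1 x" "0 \<le> s x / q1 x"
    using assms(2)[of x] by (auto intro: divide_right_mono)
  then show ?case
    by (auto simp: Delta_def)
qed

lemma reciprocal_close_imp_comparable:
  fixes a b :: real
  assumes "0 < a" "0 < b" and "\<bar>1 / b - 1 / a\<bar> \<le> 1 / (2 * a)"
  shows "2 / 3 * a \<le> b \<and> b \<le> 2 * a"
proof -
  have "1 / b \<le> 3 / (2 * a)" and "1 / (2 * a) \<le> 1 / b"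
    using assms(3) by (auto simp: abs_le_iff field_simps)
  with assms(1,2) show ?thesis
    by (simp add: field_simps)
qed

lemma q1_comparable_on_step:
  fixes q1 q1' s :: "real \<Rightarrow> real" and \<nu> H :: real
  assumes q1_pos: "\<And>x. 0 < q1 x" and q1_ac: "loc_abs_cont q1"
    and q1_deriv: "AE x in lborel. (q1 has_real_derivative q1' x) (at x)"
    and s_pos: "\<And>x. 0 < s x" and "1 \<le> \<nu>" and "2 * \<nu> * H \<le> s x"
    and slope: "\<And>\<xi>. \<xi> \<in> Delta s q1 x \<Longrightarrow> \<bar>q1' \<xi>\<bar> / (q1 \<xi>)\<^sup>2 \<le> 1 / s \<xi>"
    and scale: "\<And>\<xi>. \<xi> \<in> Delta s q1 x \<Longrightarrow> 1 / \<nu> \<le> s \<xi> / s x"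
    and subset: "{x..x + H / q1 x} \<subseteq> Delta s q1 x" and t: "t \<in> {x..x + H / q1 x}"
  shows "2 / 3 * q1 x \<le> q1 t \<and> q1 t \<le> 2 * q1 x"
proof (rule reciprocal_close_imp_comparable[OF q1_pos q1_pos])
  have bound: "\<bar>q1' \<xi>\<bar> / (q1 \<xi>)\<^sup>2 \<le> \<nu> / s x" if "\<xi> \<in> {x..t}" for \<xi>
  proof -
    have "\<xi> \<in> Delta s q1 x"
      using that t subset by auto
    then have "\<bar>q1' \<xi>\<bar> / (q1 \<xi>)\<^sup>2 \<le> 1 / s \<xi>" and "1 / \<nu> \<le> s \<xi> / s x"
      by (auto intro: slope scale)
    moreover from this(2) have "1 / s \<xi> \<le> \<nu> / s x"
      using s_pos[of x] s_pos[of \<xi>] \<open>1 \<le> \<nu>\<close> by (simp add: field_simps)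
    ultimately show ?thesis
      by linarith
  qed
  have "\<bar>1 / q1 t - 1 / q1 x\<bar> \<le> \<nu> / s x * (t - x)"
    using t s_pos[of x] \<open>1 \<le> \<nu>\<close>
    by (intro loc_abs_cont_reciprocal_diff_le[OF q1_ac q1_pos q1_deriv _ _ bound]) auto
  also have "\<dots> \<le> \<nu> / s x * (H / q1 x)"
    using t s_pos[of x] \<open>1 \<le> \<nu>\<close> by (intro mult_left_mono) auto
  also have "\<dots> \<le> 1 / (2 * q1 x)"
    using \<open>2 * \<nu> * H \<le> s x\<close> s_pos[of x] q1_pos[of x] by (simp add: field_simps)
  finally show "\<bar>1 / q1 t - 1 / q1 x\<bar> \<le> 1 / (2 * q1 x)" .
qed

lemma eventually_q1_comparable:
  fixes q1 q1' s :: "real \<Rightarrow> real" and \<nu> H :: real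
  assumes q1_pos: "\<And>x. 0 < q1 x" and q1_ac: "loc_abs_cont q1"
    and q1_deriv: "AE x in lborel. (q1 has_real_derivative q1' x) (at x)"
    and s_pos: "\<And>x. 0 < s x"
    and cond_a: "filterlim s at_top at_infinity"
    and cond_b: "\<forall>\<^sub>F x in at_infinity. 1 / s x \<ge> \<bar>q1' x\<bar> / (q1 x)\<^sup>2"
    and cond_c: "((\<lambda>x. s x / (x * q1 x)) \<longlongrightarrow> 0) at_infinity"
    and "1 \<le> \<nu>"
    and cond_d: "\<forall>\<^sub>F x in at_infinity. \<forall>t\<in>Delta s q1 x. 1 / \<nu> \<le> s t / s x"
  shows "\<forall>\<^sub>F x in at_infinity. \<forall>t\<in>{x..x + H / q1 x}. 2 / 3 * q1 x \<le> q1 t \<and> q1 t \<le> 2 * q1 x"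
proof -
  have "\<forall>\<^sub>F x in at_infinity. 2 * \<nu> * H \<le> s x"
    using cond_a by (simp add: filterlim_at_top)
  moreover have "\<forall>\<^sub>F x in at_infinity. \<forall>\<xi>\<in>Delta s q1 x. \<bar>q1' \<xi>\<bar> / (q1 \<xi>)\<^sup>2 \<le> 1 / s \<xi>"
    using eventually_forall_Delta[OF s_pos q1_pos cond_c cond_b] .
  moreover have "\<forall>\<^sub>F x in at_infinity. {x..x + H / q1 x} \<subseteq> Delta s q1 x"
    using eventually_Icc_subset_Delta[OF cond_a q1_pos] .
  ultimately show ?thesis
    using cond_d
  proof eventually_elim
    case (elim x)
    show ?case
    proof
      fix t
      assume "t \<in> {x..x + H / q1 x}"
      with elim show "2 / 3 * q1 x \<le> q1 t \<and> q1 t \<le> 2 * q1 x"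
        by (intro q1_comparable_on_step[OF q1_pos q1_ac q1_deriv, where s = s and x = x and H = H])
          (use s_pos \<open>1 \<le> \<nu>\<close> in auto)
    qed
  qed
qed

context nonneg_potential
begin

lemma halving_step_at:
  fixes q1 q2 :: "real \<Rightarrow> real" and K H :: real
  assumes split: "\<And>x. q x = q1 x + q2 x" and q1_pos: "\<And>x. 0 < q1 x"
    and ratio_int: "\<And>a b. (\<lambda>\<xi>. q2 \<xi> / q1 \<xi>) integrable_on {a..b}"
    and ratio_bound: "\<And>t. x \<le> t \<Longrightarrow> t \<le> x + H / q1 x \<Longrightarrow>
      \<bar>q1 t * integral {x..t} (\<lambda>\<xi>. q2 \<xi> / q1 \<xi>)\<bar> \<le> K"
    and comparable: "\<And>t. t \<in> {x..x + H / q1 x} \<Longrightarrow> 2 / 3 * q1 x \<le> q1 t \<and> q1 t \<le> 2 * q1 x"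
    and "0 \<le> K" and "1 \<le> H" and "K + 2 \<le> 2 / 3 * H"
  shows "exp (- Q x (x + H / q1 x)) * q1 x \<le> q1 (x + H / q1 x) / 2 \<and> Q x (x + 1 / q1 x) \<le> 2 + 3 * K"
proof -
  define y where "y = x + H / q1 x"
  have bounds: "2 / 3 * q1 x * (t - x) - 2 / 3 * q1 x * (K / q1 t) \<le> Q x t \<and>
      Q x t \<le> 2 * q1 x * (t - x) + 2 * q1 x * (K / q1 t)"
    if "x \<le> t" "t \<le> y" for t
    using that comparable ratio_bound q1_pos[of x] unfolding y_def
    by (intro Q_comparison[OF split _ _ _ ratio_int]) auto
  have "x \<le> y" and "y - x = H / q1 x"
    using q1_pos[of x] \<open>1 \<le> H\<close> by (simp_all add: y_def)
  then have "2 / 3 * q1 x \<le> q1 y"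
    using comparable by (auto simp: y_def)
  then have "2 / 3 * q1 x * (K / q1 y) \<le> q1 y * (K / q1 y)"
    using \<open>0 \<le> K\<close> q1_pos[of y] by (intro mult_right_mono) auto
  then have "2 / 3 * H - K \<le> Q x y"
    using bounds[OF \<open>x \<le> y\<close> order_refl] \<open>y - x = H / q1 x\<close> q1_pos[of x] q1_pos[of y] by simp
  then have "exp (- Q x y) \<le> exp (- 2)"
    using \<open>K + 2 \<le> 2 / 3 * H\<close> by simp
  also have "\<dots> \<le> 1 / 3"
    using exp_ge_add_one_self[of 2] by (simp add: exp_minus field_simps)
  finally have "exp (- Q x y) * q1 x \<le> 1 / 3 * (3 / 2 * q1 y)"
    using \<open>2 / 3 * q1 x \<le> q1 y\<close> q1_pos[of x] by (intro mult_mono) auto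
  moreover have "Q x (x + 1 / q1 x) \<le> 2 + 3 * K"
  proof -
    define z where "z = x + 1 / q1 x"
    have "x \<le> z" "z \<le> y"
      using q1_pos[of x] \<open>1 \<le> H\<close> by (simp_all add: z_def y_def divide_right_mono)
    then have "2 / 3 * q1 x \<le> q1 z"
      using comparable by (auto simp: y_def)
    then have "2 * q1 x * (K / q1 z) \<le> 3 * q1 z * (K / q1 z)"
      using \<open>0 \<le> K\<close> q1_pos[of z] by (intro mult_right_mono) auto
    then show ?thesis
      using bounds[OF \<open>x \<le> z\<close> \<open>z \<le> y\<close>] q1_pos[of x] q1_pos[of z] by (simp add: z_def)
  qed
  ultimately show ?thesis
    by (simp add: y_def)
qed

lemma eventually_halving_step:
  fixes q1 q1' q2 s :: "real \<Rightarrow> real" and \<nu> K H :: real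
  assumes split: "\<And>x. q x = q1 x + q2 x"
    and q1_pos: "\<And>x. 0 < q1 x" and q1_ac: "loc_abs_cont q1"
    and q1_deriv: "AE x in lborel. (q1 has_real_derivative q1' x) (at x)"
    and q2_loc: "loc_integrable q2"
    and s_pos: "\<And>x. 0 < s x"
    and cond_a: "filterlim s at_top at_infinity"
    and cond_b: "\<forall>\<^sub>F x in at_infinity. 1 / s x \<ge> \<bar>q1' x\<bar> / (q1 x)\<^sup>2"
    and cond_c: "((\<lambda>x. s x / (x * q1 x)) \<longlongrightarrow> 0) at_infinity"
    and "1 \<le> \<nu>" and cond_d: "\<forall>\<^sub>F x in at_infinity. \<forall>t\<in>Delta s q1 x. 1 / \<nu> \<le> s t / s x"
    and cond_e: "\<And>x t. t \<in> Delta s q1 x \<Longrightarrow> \<bar>q1 t * (LBINT \<xi>=x..t. q2 \<xi> / q1 \<xi>)\<bar> \<le> K"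
    and "1 \<le> H" and "K + 2 \<le> 2 / 3 * H"
  shows "\<forall>\<^sub>F x in at_infinity. exp (- Q x (x + H / q1 x)) * q1 x \<le> q1 (x + H / q1 x) / 2 \<and>
                                Q x (x + 1 / q1 x) \<le> 2 + 3 * K"
proof -
  have "0 \<le> K"
    using cond_e[of 0 0] s_pos[of 0] q1_pos[of 0] by (simp add: Delta_def)
  have ratio_loc: "loc_integrable (\<lambda>\<xi>. q2 \<xi> / q1 \<xi>)"
    using q2_loc loc_abs_cont_imp_continuous[OF q1_ac] q1_pos by (rule loc_integrable_divide)
  have "\<forall>\<^sub>F x in at_infinity. \<forall>t\<in>{x..x + H / q1 x}. 2 / 3 * q1 x \<le> q1 t \<and> q1 t \<le> 2 * q1 x"
    by (rule eventually_q1_comparable[OF q1_pos q1_ac q1_deriv s_pos cond_a cond_b cond_c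
          \<open>1 \<le> \<nu>\<close> cond_d])
  moreover have "\<forall>\<^sub>F x in at_infinity. {x..x + H / q1 x} \<subseteq> Delta s q1 x"
    by (rule eventually_Icc_subset_Delta[OF cond_a q1_pos])
  ultimately show ?thesis
  proof eventually_elim
    case (elim x)
    have "\<bar>q1 t * integral {x..t} (\<lambda>\<xi>. q2 \<xi> / q1 \<xi>)\<bar> \<le> K"
      if "x \<le> t" "t \<le> x + H / q1 x" for t
      using cond_e[of t x] elim(2) that loc_integrable_LBINT_eq_integral[OF ratio_loc \<open>x \<le> t\<close>] by auto
    with elim(1) show ?case
      using \<open>0 \<le> K\<close> \<open>1 \<le> H\<close> \<open>K + 2 \<le> 2 / 3 * H\<close>
      by (intro halving_step_at[OF split q1_pos loc_integrable_integrable_on[OF ratio_loc]]) auto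
  qed
qed

end

lemma two_sided_bound_merge:
  fixes f :: "'a \<Rightarrow> ennreal" and w :: "'a \<Rightarrow> real"
  assumes w_pos: "\<And>x. 0 < w x" and "0 < c"
    and lower: "\<And>x. ennreal (c / w x) \<le> f x" and upper: "\<And>x. f x \<le> ennreal (C / w x)"
  shows "\<exists>c'>0. \<forall>x. ennreal (1 / (c' * w x)) \<le> f x \<and> f x \<le> ennreal (c' / w x)"
proof (intro exI conjI allI)
  define c' where "c' = max (max C 1) (1 / c)"
  show "0 < c'"
    by (simp add: c'_def)
  fix x
  have "1 / c' \<le> c"
    using \<open>0 < c\<close> by (auto simp: c'_def field_simps max_def)
  then have "1 / (c' * w x) \<le> c / w x"
    using w_pos[of x] by (simp add: divide_right_mono flip: divide_divide_eq_left)
  with lower show "ennreal (1 / (c' * w x)) \<le> f x"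
    by (meson ennreal_leI order_trans)
  have "C / w x \<le> c' / w x"
    using w_pos[of x] by (intro divide_right_mono) (auto simp: c'_def)
  with upper show "f x \<le> ennreal (c' / w x)"
    by (meson ennreal_leI order_trans)
qed

theorem theorem3p1:
  fixes q q1 q2 q1' s :: "real \<Rightarrow> real"
  assumes q_nonneg: "\<And>x. 0 \<le> q x"
    and q_loc: "loc_integrable q"
    and q_split: "\<And>x. q x = q1 x + q2 x"
    and q1_pos: "\<And>x. 0 < q1 x"
    and q1_ac: "loc_abs_cont q1"
    and q1_deriv: "AE x in lborel. (q1 has_real_derivative q1' x) (at x)"
    and q2_loc: "loc_integrable q2"
    and s_cont: "continuous_on UNIV s"
    and s_pos: "\<And>x. 0 < s x"
    and cond_a: "filterlim s at_top at_infinity"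
    and cond_b: "\<forall>\<^sub>F x in at_infinity. 1 / s x \<ge> \<bar>q1' x\<bar> / (q1 x)\<^sup>2"
    and cond_c: "((\<lambda>x. s x / (x * q1 x)) \<longlongrightarrow> 0) at_infinity"
    and cond_d: "\<exists>\<nu>::real. 1 \<le> \<nu> \<and>
        (\<forall>\<^sub>F x in at_infinity. \<forall>t\<in>Delta s q1 x. 1 / \<nu> \<le> s t / s x \<and> s t / s x \<le> \<nu>)"
    and cond_e: "\<exists>K::real. \<forall>x. \<forall>t\<in>Delta s q1 x.
        \<bar>q1 t * (LBINT \<xi>=x..t. q2 \<xi> / q1 \<xi>)\<bar> \<le> K"
  shows "\<exists>c::real. 0 < c \<and>
    (\<forall>x. ennreal (1 / (c * q1 x)) \<le> J q x \<and> J q x \<le> ennreal (c / q1 x))"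
proof -
  interpret nonneg_potential q
    using q_nonneg q_loc by unfold_locales
  obtain \<nu> where "1 \<le> \<nu>"
    and "\<forall>\<^sub>F x in at_infinity. \<forall>t\<in>Delta s q1 x. 1 / \<nu> \<le> s t / s x \<and> s t / s x \<le> \<nu>"
    using cond_d by blast
  then have cond_d': "\<forall>\<^sub>F x in at_infinity. \<forall>t\<in>Delta s q1 x. 1 / \<nu> \<le> s t / s x"
    by (auto elim: eventually_mono)
  obtain K where cond_e': "\<And>x t. t \<in> Delta s q1 x \<Longrightarrow> \<bar>q1 t * (LBINT \<xi>=x..t. q2 \<xi> / q1 \<xi>)\<bar> \<le> K"
    using cond_e by blast
  \<comment> \<open>Chosen so that one step raises Q by at least 2: then exp (-2) times the factor 3/2 by
    which q1 may drop along the step is at most 1/2.\<close>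
  define H where "H = 3 / 2 * (\<bar>K\<bar> + 2)"
  have "\<forall>\<^sub>F x in at_infinity. exp (- Q x (x + H / q1 x)) * q1 x \<le> q1 (x + H / q1 x) / 2 \<and>
                               Q x (x + 1 / q1 x) \<le> 2 + 3 * K"
    by (rule eventually_halving_step[OF q_split q1_pos q1_ac q1_deriv q2_loc s_pos cond_a cond_b
          cond_c \<open>1 \<le> \<nu>\<close> cond_d' cond_e']) (auto simp: H_def)
  then obtain R where "0 \<le> R" and R: "\<And>x. R \<le> \<bar>x\<bar> \<Longrightarrow>
      exp (- Q x (x + H / q1 x)) * q1 x \<le> q1 (x + H / q1 x) / 2 \<and> Q x (x + 1 / q1 x) \<le> 2 + 3 * K"
    by (rule eventually_at_infinity_absE) auto
  note q1_cont = loc_abs_cont_imp_continuous[OF q1_ac]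
  interpret halving_weight q q1 R H
    using q1_cont q1_pos \<open>0 \<le> R\<close> R by unfold_locales (auto simp: H_def)
  obtain C where upper: "\<And>x. J q x \<le> ennreal (C / q1 x)"
    using J_upper_bound by blast
  obtain c where "0 < c" and lower: "\<And>x. ennreal (c / q1 x) \<le> J q x"
    using J_lower_bound[OF q1_cont q1_pos, of R "2 + 3 * K"] R by blast
  show ?thesis
    using two_sided_bound_merge[OF q1_pos \<open>0 < c\<close> lower upper] .
qed

end
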